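(* Let $\mathbf t$ be a hyper-term, $P$ a hyper-assertion and $Q$ a post hyper-assertion, with $\mathrm{pvar}(P)\cap\mathrm{mods}(\mathbf t)=\emptyset$. Then $$\mathrm{proj}(\mathbf t)\wedge\mathrm{wp}\,\mathbf t\,\{\lambda\mathbf r.\ Q(\mathbf r)\Rightarrow P\}\ \vdash\ \big(\mathrm{wp}\,\mathbf t\,\{Q\}\Rightarrow P\big).$$
   Context: Setting. $\mathrm{Val}=\mathbb{Z}$; $\mathrm{PVar}$ is a countably infinite set of program variables; a store is a function $s:\mathrm{PVar}\to\mathrm{Val}$; indices are $\mathrm{Idx}=\mathbb{N}$. Terms of a first-order imperative language are generated by $t ::= v \mid x \mid * \mid t\oplus t \mid \mathtt{skip}\mid x:=t \mid t;t \mid \mathtt{if}\ t\ \mathtt{then}\ t\ \mathtt{else}\ t \mid \mathtt{while}\ t\ \mathtt{do}\ t$, with a nondeterministic big-step semantics $t,s\Downarrow v,s'$ ($t$ run from store $s$ may terminate with return value $v$ and final store $s'$; $*$ returns an arbitrary integer). A hyper-term $\mathbf t$ is a finitely supported partial function from $\mathrm{Idx}$ to terms, with support $\mathrm{supp}(\mathbf t)$; a hyper-store is a total function $\mathbf s:\mathrm{Idx}\to\mathrm{Store}$; a hyper-return-value is a finitely supported partial function $\mathbf v:\mathrm{Idx}\rightharpoonup\mathrm{Val}$. $\mathbf t,\mathbf s\Downarrow\mathbf v,\mathbf s'$ holds iff for every $i\in\mathrm{supp}(\mathbf t)$, $\mathbf t(i),\mathbf s(i)\Downarrow\mathbf v(i),\mathbf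 s'(i)$, and for every $i\notin\mathrm{supp}(\mathbf t)$, $\mathbf s'(i)=\mathbf s(i)$ and $\mathbf v(i)$ is undefined. A hyper-assertion is a predicate on hyper-stores; a post hyper-assertion is an upward-closed map $Q$ from hyper-return-values to hyper-assertions (if $Q(\mathbf v)(\mathbf s)$ and $\mathbf v'$ agrees with $\mathbf v$ on $\mathrm{supp}(\mathbf v)$ then $Q(\mathbf v')(\mathbf s)$). Connectives are pointwise. Entailment $P\vdash R$ means $\forall\mathbf s.\ P(\mathbf s)\Rightarrow R(\mathbf s)$. $\mathrm{wp}\,\mathbf t\,\{Q\}(\mathbf s):\iff\forall\mathbf v,\mathbf s'.\ (\mathbf t,\mathbf s\Downarrow\mathbf v,\mathbf s')\Rightarrow Q(\mathbf v)(\mathbf s')$. Variables. $\mathrm{mods}(t)$ is the set of program variables assigned (occurring on the left of $:=$) in $t$; $\mathrm{mods}(\mathbf t)=\{(x,i)\mid i\in\mathrm{supp}(\mathbf t),\ x\in\mathrm{mods}(\mathbf t(i))\}$. $\mathrm{pvar}(P)=\{(x,i)\in\mathrm{PVar}\times\mathrm{Idx}\mid \exists\mathbf s,v.\ P(\mathbf s)\not\Leftrightarrow P(\mathbf s[i:\mathbf s(i)[x:v]])\}$. Projectability. $\mathrm{proj}(\mathbf t)(\mathbf s):\iff\exists\mathbf v,\mathbf s'.\ \mathbf t,\mathbf s\Downarrow\mathbf v,\mathbf s'$. *)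

theory Defs
  imports Main
begin

type_synonym val = int
type_synonym pvar = string
type_synonym store = "pvar \<Rightarrow> val"
type_synonym idx = nat

datatype tm =
    TVal val
  | TVar pvar
  | TAny
  | TBinOp "val \<Rightarrow> val \<Rightarrow> val" tm tm
  | TSkip
  | TAssign pvar tm
  | TSeq tm tm
  | TIf tm tm tm
  | TWhile tm tm

inductive bigstep :: "tm \<Rightarrow> store \<Rightarrow> val \<Rightarrow> store \<Rightarrow> bool" where
  BVal: "bigstep (TVal v) s v s"
| BVar: "bigstep (TVar x) s (s x) s"
| BAny: "bigstep TAny s v s"
| BBinOp: "bigstep t1 s v1 s1 \<Longrightarrow> bigstep t2 s1 v2 s2 \<Longrightarrow> bigstep (TBinOp f t1 t2) s (f v1 v2) s2"
| BSkip: "bigstep TSkip s 0 s"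
| BAssign: "bigstep t s v s' \<Longrightarrow> bigstep (TAssign x t) s 0 (s'(x := v))"
| BSeq: "bigstep t1 s v1 s1 \<Longrightarrow> bigstep t2 s1 v2 s2 \<Longrightarrow> bigstep (TSeq t1 t2) s v2 s2"
| BIfT: "bigstep b s v s1 \<Longrightarrow> v \<noteq> 0 \<Longrightarrow> bigstep t1 s1 v' s2 \<Longrightarrow> bigstep (TIf b t1 t2) s v' s2"
| BIfF: "bigstep b s 0 s1 \<Longrightarrow> bigstep t2 s1 v' s2 \<Longrightarrow> bigstep (TIf b t1 t2) s v' s2"
| BWhileF: "bigstep b s 0 s1 \<Longrightarrow> bigstep (TWhile b c) s 0 s1"
| BWhileT: "bigstep b s v s1 \<Longrightarrow> v \<noteq> 0 \<Longrightarrow> bigstep c s1 v' s2 \<Longrightarrow>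
              bigstep (TWhile b c) s2 r s3 \<Longrightarrow> bigstep (TWhile b c) s r s3"

(* hyper-terms: finitely supported partial maps (finiteness imposed as hypothesis) *)
type_synonym htm = "idx \<Rightarrow> tm option"
type_synonym hstore = "idx \<Rightarrow> store"
type_synonym hval = "idx \<Rightarrow> val option"
type_synonym hassn = "hstore \<Rightarrow> bool"
type_synonym post_hassn = "hval \<Rightarrow> hassn"

definition hbigstep :: "htm \<Rightarrow> hstore \<Rightarrow> hval \<Rightarrow> hstore \<Rightarrow> bool" where
  "hbigstep t s v s' \<longleftrightarrow>
     (\<forall>i \<in> dom t. \<exists>vi. v i = Some vi \<and> bigstep (the (t i)) (s i) vi (s' i)) \<and>
     (\<forall>i. i \<notin> dom t \<longrightarrow> s' i = s i \<and> v i = None)"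

definition upward_closed :: "post_hassn \<Rightarrow> bool" where
  "upward_closed Q \<longleftrightarrow>
     (\<forall>v v' s. Q v s \<longrightarrow> (\<forall>i \<in> dom v. v' i = v i) \<longrightarrow> Q v' s)"

definition hentails :: "hassn \<Rightarrow> hassn \<Rightarrow> bool" where
  "hentails P R \<longleftrightarrow> (\<forall>s. P s \<longrightarrow> R s)"

definition wp :: "htm \<Rightarrow> post_hassn \<Rightarrow> hassn" where
  "wp t Q s \<longleftrightarrow> (\<forall>v s'. hbigstep t s v s' \<longrightarrow> Q v s')"

fun mods :: "tm \<Rightarrow> pvar set" where
  "mods (TVal v) = {}"
| "mods (TVar x) = {}"
| "mods TAny = {}"
| "mods (TBinOp f t1 t2) = mods t1 \<union> mods t2"
| "mods TSkip = {}"
| "mods (TAssign x t) = insert x (mods t)"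
| "mods (TSeq t1 t2) = mods t1 \<union> mods t2"
| "mods (TIf b t1 t2) = mods b \<union> mods t1 \<union> mods t2"
| "mods (TWhile b c) = mods b \<union> mods c"

definition hmods :: "htm \<Rightarrow> (pvar \<times> idx) set" where
  "hmods t = {(x, i). i \<in> dom t \<and> x \<in> mods (the (t i))}"

definition pvar :: "hassn \<Rightarrow> (pvar \<times> idx) set" where
  "pvar P = {(x, i). \<exists>s v. P s \<noteq> P (s(i := (s i)(x := v)))}"

definition proj :: "htm \<Rightarrow> hassn" where
  "proj t s \<longleftrightarrow> (\<exists>v s'. hbigstep t s v s')"

end

theory Submission
  imports Defs
begin

text \<open>Run \<open>t\<close> once from \<open>s\<close> (possible by projectability), reaching \<open>s'\<close>. Both weakest
  preconditions hold at \<open>s\<close>, so \<open>Q\<close> and hence \<open>P\<close> hold at \<open>s'\<close>. The run changes only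
  variables in \<open>mods t\<close>, on which \<open>P\<close> does not depend, so \<open>P\<close> already holds at \<open>s\<close>.\<close>

lemma finite_mods: "finite (mods t)"
  by (induction t) auto

lemma finite_hmods: "finite (dom t) \<Longrightarrow> finite (hmods t)"
proof -
  assume "finite (dom t)"
  then have "finite (\<Union>i\<in>dom t. mods (the (t i)) \<times> {i})"
    using finite_mods by auto
  moreover have "hmods t \<subseteq> (\<Union>i\<in>dom t. mods (the (t i)) \<times> {i})"
    unfolding hmods_def by auto
  ultimately show ?thesis
    using finite_subset by blast
qed

lemma bigstep_unmodified: "bigstep t s v s' \<Longrightarrow> x \<notin> mods t \<Longrightarrow> s' x = s x"
  by (induction rule: bigstep.induct) auto

lemma hbigstep_unmodified:
  assumes "hbigstep t s v s'" and "(x, i) \<notin> hmods t"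
  shows "s' i x = s i x"
proof (cases "i \<in> dom t")
  case True
  then obtain vi where "bigstep (the (t i)) (s i) vi (s' i)"
    using assms(1) unfolding hbigstep_def by blast
  moreover have "x \<notin> mods (the (t i))"
    using assms(2) True unfolding hmods_def by auto
  ultimately show ?thesis
    by (rule bigstep_unmodified)
next
  case False
  then show ?thesis
    using assms(1) unfolding hbigstep_def by auto
qed

text \<open>Finiteness of \<open>D\<close> matters: \<open>pvar P\<close> only detects dependence on single coordinates,
  so the stores are connected by changing one coordinate of \<open>D\<close> at a time.\<close>

lemma hassn_eq_if_agree_outside:
  assumes "finite D" and "D \<inter> pvar P = {}"
    and "\<And>x i. (x, i) \<notin> D \<Longrightarrow> s' i x = s i x"
  shows "P s = P s'"
  using assms
proof (induction D arbitrary: s rule: finite_induct)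
  case empty
  then have "s = s'"
    by (auto intro!: ext)
  then show ?case
    by simp
next
  case (insert p D)
  obtain x i where p: "p = (x, i)"
    by (cases p)
  define s1 where "s1 = s(i := (s i)(x := s' i x))"
  have "(x, i) \<notin> pvar P"
    using insert.prems p by auto
  then have "P s = P s1"
    unfolding pvar_def s1_def by blast
  also have "P s1 = P s'"
    using insert.prems p by (intro insert.IH) (auto simp: s1_def)
  finally show ?case .
qed

theorem mainTheorem4:
  fixes t :: htm and P :: hassn and Q :: post_hassn
  assumes "finite (dom t)"
    and "upward_closed Q"
    and "pvar P \<inter> hmods t = {}"
  shows "hentails (\<lambda>s. proj t s \<and> wp t (\<lambda>r s'. Q r s' \<longrightarrow> P s') s)
                  (\<lambda>s. wp t Q s \<longrightarrow> P s)"
  unfolding hentails_def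
proof (intro allI impI)
  fix s
  assume pre: "proj t s \<and> wp t (\<lambda>r s'. Q r s' \<longrightarrow> P s') s" and "wp t Q s"
  obtain v s' where run: "hbigstep t s v s'"
    using pre unfolding proj_def by blast
  have "P s'"
    using run pre \<open>wp t Q s\<close> unfolding wp_def by blast
  moreover have "P s = P s'"
    using finite_hmods[OF assms(1)] assms(3) hbigstep_unmodified[OF run]
    by (intro hassn_eq_if_agree_outside) auto
  ultimately show "P s"
    by simp
qed

end
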